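(* Let $p\in\mathbb{C}\setminus\{0\}$ and let $k\ge0$, $N\ge0$ be integers. Let $\mathcal{G}_{k,N}$ be the Lie algebra with $\mathbb{C}$-basis $\{J_{i,m}\mid 0\le i\le k,\ 0\le m\le N\}$ and brackets $[J_{i,m},J_{j,n}]=((j+p)(m+1)-(i+p)(n+1))J_{i+j,m+n}$ if $i+j\le k$ and $m+n\le N$, and $[J_{i,m},J_{j,n}]=0$ otherwise. If $V$ is a nontrivial finite-dimensional irreducible $\mathcal{G}_{k,N}$-module, then $\dim V=1$. *)

theory Defs
  imports "Jordan_Normal_Form.Matrix"
begin

definition gcoef :: "complex \<Rightarrow> nat \<Rightarrow> nat \<Rightarrow> nat \<Rightarrow> nat \<Rightarrow> complex" where
  "gcoef p i m j n = (of_nat j + p) * (of_nat m + 1) - (of_nat i + p) * (of_nat n + 1)"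

definition is_GkN_rep :: "complex \<Rightarrow> nat \<Rightarrow> nat \<Rightarrow> nat \<Rightarrow> (nat \<Rightarrow> nat \<Rightarrow> complex mat) \<Rightarrow> bool" where
  "is_GkN_rep p k N d rho \<longleftrightarrow>
     (\<forall>i m. i \<le> k \<longrightarrow> m \<le> N \<longrightarrow> rho i m \<in> carrier_mat d d) \<and>
     (\<forall>i m j n. i \<le> k \<longrightarrow> m \<le> N \<longrightarrow> j \<le> k \<longrightarrow> n \<le> N \<longrightarrow>
        rho i m * rho j n - rho j n * rho i m =
          (if i + j \<le> k \<and> m + n \<le> N
           then gcoef p i m j n \<cdot>\<^sub>m rho (i + j) (m + n)
           else 0\<^sub>m d d))"

definition cvec_subspace :: "nat \<Rightarrow> complex vec set \<Rightarrow> bool" where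
  "cvec_subspace d W \<longleftrightarrow> W \<subseteq> carrier_vec d \<and> 0\<^sub>v d \<in> W \<and>
     (\<forall>v\<in>W. \<forall>w\<in>W. v + w \<in> W) \<and> (\<forall>c. \<forall>v\<in>W. c \<cdot>\<^sub>v v \<in> W)"

definition GkN_submodule :: "nat \<Rightarrow> nat \<Rightarrow> nat \<Rightarrow> (nat \<Rightarrow> nat \<Rightarrow> complex mat) \<Rightarrow> complex vec set \<Rightarrow> bool" where
  "GkN_submodule k N d rho W \<longleftrightarrow> cvec_subspace d W \<and>
     (\<forall>i m. i \<le> k \<longrightarrow> m \<le> N \<longrightarrow> (\<forall>v\<in>W. rho i m *\<^sub>v v \<in> W))"

definition GkN_irreducible :: "nat \<Rightarrow> nat \<Rightarrow> nat \<Rightarrow> (nat \<Rightarrow> nat \<Rightarrow> complex mat) \<Rightarrow> bool" where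
  "GkN_irreducible k N d rho \<longleftrightarrow> d > 0 \<and>
     (\<forall>W. GkN_submodule k N d rho W \<longrightarrow> W = {0\<^sub>v d} \<or> W = carrier_vec d)"

definition GkN_nontrivial :: "nat \<Rightarrow> nat \<Rightarrow> nat \<Rightarrow> (nat \<Rightarrow> nat \<Rightarrow> complex mat) \<Rightarrow> bool" where
  "GkN_nontrivial k N d rho \<longleftrightarrow> (\<exists>i m. i \<le> k \<and> m \<le> N \<and> rho i m \<noteq> 0\<^sub>m d d)"

end

theory Submission
  imports Defs "Jordan_Normal_Form.Matrix_Kernel" "Jordan_Normal_Form.Spectral_Radius"
begin

text \<open>Downward
  induction on the degree \<open>i + m\<close> shows that every \<open>J(i, m) \<noteq> J(0, 0)\<close> acts by zero. Once
  all elements of higher degree act trivially, \<open>X = \<rho> J(j, n)\<close> commutes with every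
  \<open>\<rho> J(i, m)\<close> of positive degree, and \<open>A = \<rho> J(0, 0)\<close> satisfies \<open>AX - XA = cX\<close> with the
  weight \<open>c = j - pn\<close>. If \<open>c \<noteq> 0\<close>, then \<open>X\<close> is singular (otherwise the trace of
  \<open>(AX - XA) X\<^sup>-\<^sup>1 = cI\<close> would be both \<open>0\<close> and \<open>c \<cdot> dim\<close>), so \<open>ker X\<close> is a nonzero
  submodule and \<open>X = 0\<close>. If \<open>c = 0\<close>, then \<open>X\<close> is central, hence scalar by Schur's lemma;
  but \<open>j = pn \<noteq> 0\<close> and \<open>[J(j, 0), J(0, n)] = -j(n + 2) J(j, n)\<close> make \<open>X\<close> traceless,
  so again \<open>X = 0\<close>. Then \<open>\<rho> J(0, 0)\<close> is scalar too, every line is a submodule, and the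
  dimension is 1.\<close>

lemma minus_mat_eq_zero_iff:
  fixes A B :: "'a :: ab_group_add mat"
  assumes "A \<in> carrier_mat nr nc" "B \<in> carrier_mat nr nc"
  shows "A - B = 0\<^sub>m nr nc \<longleftrightarrow> A = B"
  using assms by (auto simp: mat_eq_iff)

lemma smult_mult_mat_vec:
  assumes "(A :: 'a :: comm_ring mat) \<in> carrier_mat nr nc" "v \<in> carrier_vec nc"
  shows "(c \<cdot>\<^sub>m A) *\<^sub>v v = c \<cdot>\<^sub>v (A *\<^sub>v v)"
  using assms by (intro eq_vecI) (auto simp: scalar_prod_def sum_distrib_left mult.assoc)

lemma mult_mat_vec_zero [simp]: "A \<in> carrier_mat nr nc \<Longrightarrow> A *\<^sub>v 0\<^sub>v nc = 0\<^sub>v nr"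
  by (intro eq_vecI) auto

lemma zero_smult_mat [simp]: "A \<in> carrier_mat nr nc \<Longrightarrow> (0 :: 'a :: semiring_0) \<cdot>\<^sub>m A = 0\<^sub>m nr nc"
  by (intro eq_matI) auto

definition mat_trace :: "'a :: comm_ring mat \<Rightarrow> 'a" where
  "mat_trace A = (\<Sum>i<dim_row A. A $$ (i, i))"

lemma mat_trace_mult_comm:
  assumes "(A :: 'a :: comm_ring mat) \<in> carrier_mat n m" "B \<in> carrier_mat m n"
  shows "mat_trace (A * B) = mat_trace (B * A)"
proof -
  have "mat_trace (A * B) = (\<Sum>i<n. \<Sum>j<m. A $$ (i, j) * B $$ (j, i))"
    using assms by (simp add: mat_trace_def scalar_prod_def atLeast0LessThan)
  also have "\<dots> = (\<Sum>j<m. \<Sum>i<n. B $$ (j, i) * A $$ (i, j))"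
    by (subst sum.swap) (simp add: mult.commute)
  also have "\<dots> = mat_trace (B * A)"
    using assms by (simp add: mat_trace_def scalar_prod_def atLeast0LessThan)
  finally show ?thesis .
qed

lemma mat_trace_minus:
  "A \<in> carrier_mat n n \<Longrightarrow> B \<in> carrier_mat n n \<Longrightarrow> mat_trace (A - B) = mat_trace A - mat_trace B"
  by (simp add: mat_trace_def sum_subtractf)

lemma mat_trace_smult: "A \<in> carrier_mat n n \<Longrightarrow> mat_trace (c \<cdot>\<^sub>m A) = c * mat_trace A"
  by (simp add: mat_trace_def sum_distrib_left)

lemma mat_trace_one: "mat_trace (1\<^sub>m n) = of_nat n"
  by (simp add: mat_trace_def)

lemma mat_trace_commutator:
  "A \<in> carrier_mat n n \<Longrightarrow> B \<in> carrier_mat n n \<Longrightarrow> mat_trace (A * B - B * A) = 0"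
  using mat_trace_minus[of "A * B" n "B * A"] mat_trace_mult_comm[of A n n B] by simp

lemma det_zero_if_commutator_smult:
  fixes A X :: "'a :: field_char_0 mat"
  assumes A: "A \<in> carrier_mat n n" and X: "X \<in> carrier_mat n n"
    and "n > 0" "c \<noteq> 0" and AX: "A * X - X * A = c \<cdot>\<^sub>m X"
  shows "det X = 0"
proof (rule ccontr)
  assume "det X \<noteq> 0"
  then obtain Y where Y: "Y \<in> carrier_mat n n" "X * Y = 1\<^sub>m n" "Y * X = 1\<^sub>m n"
    using det_non_zero_imp_unit[OF X] unfolding Units_def ring_mat_def by auto
  have "c \<cdot>\<^sub>m 1\<^sub>m n = (A * X - X * A) * Y"
    using AX X Y by (simp add: mult_smult_assoc_mat)
  also have "\<dots> = A * (X * Y) - X * (A * Y)"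
    using A X Y by (simp add: minus_mult_distrib_mat[of _ n n _ Y n] assoc_mult_mat[of _ n n _ n Y n])
  also have "\<dots> = A - X * (A * Y)"
    using A Y by simp
  finally have "c * of_nat n = mat_trace A - mat_trace ((A * Y) * X)"
    using A X Y by (metis mat_trace_smult mat_trace_one mat_trace_minus mat_trace_mult_comm
        mult_carrier_mat)
  also have "(A * Y) * X = A"
    using A X Y by simp
  finally show False
    using \<open>n > 0\<close> \<open>c \<noteq> 0\<close> by simp
qed

lemma mat_kernel_subspace:
  assumes M: "M \<in> carrier_mat nr nc"
  shows "cvec_subspace nc (mat_kernel M)"
  unfolding cvec_subspace_def
proof (intro conjI ballI allI)
  show "mat_kernel M \<subseteq> carrier_vec nc"
    by (rule mat_kernel_carrier[OF M])
  show "0\<^sub>v nc \<in> mat_kernel M"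
    using M by (intro mat_kernelI) auto
  show "c \<cdot>\<^sub>v v \<in> mat_kernel M" if "v \<in> mat_kernel M" for c v
    using mat_kernel_smult[OF M that] .
  show "v + w \<in> mat_kernel M" if "v \<in> mat_kernel M" "w \<in> mat_kernel M" for v w
    using mat_kernelD[OF M that(1)] mat_kernelD[OF M that(2)] M
    by (intro mat_kernelI) (auto simp: mult_add_distrib_mat_vec)
qed

lemma zero_if_mat_kernel_full:
  assumes M: "(M :: 'a :: comm_ring_1 mat) \<in> carrier_mat nr nc"
    and full: "mat_kernel M = carrier_vec nc"
  shows "M = 0\<^sub>m nr nc"
proof (rule eq_matI)
  fix i j assume ij: "i < dim_row (0\<^sub>m nr nc :: 'a mat)" "j < dim_col (0\<^sub>m nr nc :: 'a mat)"
  have "unit_vec nc j \<in> mat_kernel M"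
    using full ij by simp
  then have "M *\<^sub>v unit_vec nc j = 0\<^sub>v nr"
    by (rule mat_kernelD[OF M])
  then have "(M *\<^sub>v unit_vec nc j) $ i = 0"
    using ij by simp
  then show "M $$ (i, j) = 0\<^sub>m nr nc $$ (i, j)"
    using M ij by simp
qed (use M in auto)

lemma mat_kernel_invariant_if_commutator_smult:
  fixes A X :: "'a :: field mat"
  assumes A: "A \<in> carrier_mat n n" and X: "X \<in> carrier_mat n n"
    and AX: "A * X - X * A = c \<cdot>\<^sub>m X" and v: "v \<in> mat_kernel X"
  shows "A *\<^sub>v v \<in> mat_kernel X"
proof -
  have v: "v \<in> carrier_vec n" "X *\<^sub>v v = 0\<^sub>v n"
    using mat_kernelD[OF X v] by auto
  have "- (X *\<^sub>v (A *\<^sub>v v)) = A *\<^sub>v (X *\<^sub>v v) - X *\<^sub>v (A *\<^sub>v v)"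
    using A X v by simp
  also have "\<dots> = (A * X - X * A) *\<^sub>v v"
    using A X v by (simp add: minus_mult_distrib_mat_vec[of "A * X" n n "X * A" v])
  also have "\<dots> = 0\<^sub>v n"
    using AX X v by (auto simp: smult_mult_mat_vec)
  finally have "X *\<^sub>v (A *\<^sub>v v) = 0\<^sub>v n"
    using A X v by (simp add: uminus_zero_vec_eq)
  then show ?thesis
    using A X v by (intro mat_kernelI) auto
qed

lemma mat_kernel_invariant_if_commute:
  fixes A X :: "'a :: field mat"
  assumes A: "A \<in> carrier_mat n n" and X: "X \<in> carrier_mat n n"
    and AX: "A * X = X * A" and v: "v \<in> mat_kernel X"
  shows "A *\<^sub>v v \<in> mat_kernel X"
proof -
  have "A * X - X * A = 0 \<cdot>\<^sub>m X"
    using A X AX by simp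
  then show ?thesis
    using mat_kernel_invariant_if_commutator_smult[OF A X _ v] by blast
qed

locale GkN_irreducible_family =
  fixes k N d :: nat and rho :: "nat \<Rightarrow> nat \<Rightarrow> complex mat"
  assumes rho_carrier: "\<And>i m. i \<le> k \<Longrightarrow> m \<le> N \<Longrightarrow> rho i m \<in> carrier_mat d d"
    and irreducible: "GkN_irreducible k N d rho"
begin

lemma dim_pos: "d > 0"
  using irreducible unfolding GkN_irreducible_def by blast

lemma zero_if_invariant_kernel:
  assumes M: "M \<in> carrier_mat d d"
    and invariant: "\<And>i m v. i \<le> k \<Longrightarrow> m \<le> N \<Longrightarrow> v \<in> mat_kernel M \<Longrightarrow> rho i m *\<^sub>v v \<in> mat_kernel M"
    and v: "v \<in> mat_kernel M" "v \<noteq> 0\<^sub>v d"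
  shows "M = 0\<^sub>m d d"
proof -
  have "GkN_submodule k N d rho (mat_kernel M)"
    unfolding GkN_submodule_def using mat_kernel_subspace[OF M] invariant by blast
  then have "mat_kernel M = carrier_vec d"
    using irreducible v unfolding GkN_irreducible_def by blast
  then show ?thesis
    using zero_if_mat_kernel_full[OF M] by blast
qed

lemma scalar_if_commuting:
  assumes X: "X \<in> carrier_mat d d"
    and commute: "\<And>i m. i \<le> k \<Longrightarrow> m \<le> N \<Longrightarrow> rho i m * X = X * rho i m"
  shows "\<exists>\<mu>. X = \<mu> \<cdot>\<^sub>m 1\<^sub>m d"
proof -
  obtain \<mu> where "eigenvalue X \<mu>"
    using spectrum_non_empty[OF X dim_pos] unfolding spectrum_def by auto
  then obtain v where v: "v \<in> mat_kernel (char_matrix X \<mu>)" "v \<noteq> 0\<^sub>v d"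
    using eigenvalue_char_matrix[OF X] mat_kernelI[OF char_matrix_closed[OF X]] by blast
  have eigenspace: "w \<in> mat_kernel (char_matrix X \<mu>) \<longleftrightarrow> w \<in> carrier_vec d \<and> X *\<^sub>v w = \<mu> \<cdot>\<^sub>v w"
    for w
  proof (cases "w = 0\<^sub>v d")
    case True
    then show ?thesis
      using X char_matrix_closed[OF X] by (auto simp: mat_kernel[OF char_matrix_closed[OF X]])
  next
    case False
    then show ?thesis
      using X eigenvector_char_matrix[OF X, of w \<mu>]
      unfolding eigenvector_def mat_kernel[OF char_matrix_closed[OF X]] by auto
  qed
  have "char_matrix X \<mu> = 0\<^sub>m d d"
  proof (rule zero_if_invariant_kernel[OF char_matrix_closed[OF X] _ v])
    fix i m w assume im: "i \<le> k" "m \<le> N" and "w \<in> mat_kernel (char_matrix X \<mu>)"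
    then have w: "w \<in> carrier_vec d" "X *\<^sub>v w = \<mu> \<cdot>\<^sub>v w"
      using eigenspace by auto
    have R: "rho i m \<in> carrier_mat d d"
      using rho_carrier im by blast
    have "X *\<^sub>v (rho i m *\<^sub>v w) = rho i m *\<^sub>v (X *\<^sub>v w)"
      using commute[OF im] R X w by (metis assoc_mult_mat_vec)
    also have "\<dots> = \<mu> \<cdot>\<^sub>v (rho i m *\<^sub>v w)"
      using R w by (simp add: mult_mat_vec)
    finally show "rho i m *\<^sub>v w \<in> mat_kernel (char_matrix X \<mu>)"
      using eigenspace R w by auto
  qed
  have "X = \<mu> \<cdot>\<^sub>m 1\<^sub>m d"
  proof (rule eq_matI)
    fix i j assume ij: "i < dim_row (\<mu> \<cdot>\<^sub>m 1\<^sub>m d)" "j < dim_col (\<mu> \<cdot>\<^sub>m 1\<^sub>m d)"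
    have "char_matrix X \<mu> $$ (i, j) = 0"
      using \<open>char_matrix X \<mu> = 0\<^sub>m d d\<close> ij by simp
    then show "X $$ (i, j) = (\<mu> \<cdot>\<^sub>m 1\<^sub>m d) $$ (i, j)"
      using X ij by (simp add: char_matrix_def)
  qed (use X in auto)
  then show ?thesis ..
qed

lemma dim_one_if_scalar:
  assumes scalar: "\<And>i m. i \<le> k \<Longrightarrow> m \<le> N \<Longrightarrow> \<exists>c. rho i m = c \<cdot>\<^sub>m 1\<^sub>m d"
  shows "d = 1"
proof (rule ccontr)
  assume "d \<noteq> 1"
  then have "d > 1"
    using dim_pos by linarith
  define L :: "complex vec set" where "L = {c \<cdot>\<^sub>v unit_vec d 0 | c. True}"
  have "GkN_submodule k N d rho L"
    unfolding GkN_submodule_def cvec_subspace_def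
  proof (intro conjI allI impI ballI)
    fix i m v assume "i \<le> k" "m \<le> N" "v \<in> L"
    then obtain a b where "rho i m = a \<cdot>\<^sub>m 1\<^sub>m d" "v = b \<cdot>\<^sub>v unit_vec d 0"
      using scalar unfolding L_def by blast
    then have "rho i m *\<^sub>v v = (a * b) \<cdot>\<^sub>v unit_vec d 0"
      using smult_mult_mat_vec[of "1\<^sub>m d" d d "b \<cdot>\<^sub>v unit_vec d 0" a]
      by (simp add: smult_smult_assoc)
    then show "rho i m *\<^sub>v v \<in> L"
      unfolding L_def by blast
  next
    have "0\<^sub>v d = (0 :: complex) \<cdot>\<^sub>v unit_vec d 0"
      by (intro eq_vecI) auto
    then show "0\<^sub>v d \<in> L"
      unfolding L_def by blast
  next
    fix v w assume "v \<in> L" "w \<in> L"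
    then show "v + w \<in> L"
      unfolding L_def by (auto simp: add_smult_distrib_vec[symmetric])
  next
    fix c v assume "v \<in> L"
    then show "c \<cdot>\<^sub>v v \<in> L"
      unfolding L_def by (auto simp: smult_smult_assoc)
  qed (auto simp: L_def)
  moreover have "unit_vec d 0 = (1 :: complex) \<cdot>\<^sub>v unit_vec d 0"
    by simp
  then have "unit_vec d 0 \<in> L"
    unfolding L_def by blast
  moreover have "unit_vec d 0 $ 0 \<noteq> 0\<^sub>v d $ 0"
    using \<open>d > 1\<close> by simp
  ultimately have "L = carrier_vec d"
    using irreducible unfolding GkN_irreducible_def by force
  then have "unit_vec d 1 \<in> L"
    by simp
  then obtain c :: complex where "unit_vec d 1 = c \<cdot>\<^sub>v unit_vec d 0"
    unfolding L_def by auto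
  then have "unit_vec d 1 $ 1 = (c \<cdot>\<^sub>v unit_vec d 0) $ 1"
    by simp
  then show False
    using \<open>d > 1\<close> by simp
qed

end

locale GkN_irrep = GkN_irreducible_family k N d rho
  for p :: complex and k N d :: nat and rho :: "nat \<Rightarrow> nat \<Rightarrow> complex mat" +
  assumes bracket: "\<And>i m j n. i \<le> k \<Longrightarrow> m \<le> N \<Longrightarrow> j \<le> k \<Longrightarrow> n \<le> N \<Longrightarrow>
      rho i m * rho j n - rho j n * rho i m =
        (if i + j \<le> k \<and> m + n \<le> N then gcoef p i m j n \<cdot>\<^sub>m rho (i + j) (m + n) else 0\<^sub>m d d)"
begin

lemma commute_if_higher_vanish:
  assumes jn: "j \<le> k" "n \<le> N"
    and higher: "\<And>i m. i \<le> k \<Longrightarrow> m \<le> N \<Longrightarrow> j + n < i + m \<Longrightarrow> rho i m = 0\<^sub>m d d"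
    and im: "i \<le> k" "m \<le> N" "0 < i + m"
  shows "rho i m * rho j n = rho j n * rho i m"
proof -
  have "rho i m * rho j n - rho j n * rho i m = 0\<^sub>m d d"
    using bracket[OF im(1,2) jn] higher[of "i + j" "m + n"] im by auto
  then show ?thesis
    using minus_mat_eq_zero_iff rho_carrier im jn by (meson mult_carrier_mat)
qed

lemma vanish_if_weight_nonzero:
  assumes jn: "j \<le> k" "n \<le> N"
    and commute: "\<And>i m. i \<le> k \<Longrightarrow> m \<le> N \<Longrightarrow> 0 < i + m \<Longrightarrow> rho i m * rho j n = rho j n * rho i m"
    and weight: "gcoef p 0 0 j n \<noteq> 0"
  shows "rho j n = 0\<^sub>m d d"
proof -
  have A: "rho 0 0 \<in> carrier_mat d d" and X: "rho j n \<in> carrier_mat d d"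
    using rho_carrier jn by auto
  have AX: "rho 0 0 * rho j n - rho j n * rho 0 0 = gcoef p 0 0 j n \<cdot>\<^sub>m rho j n"
    using bracket[of 0 0 j n] jn by simp
  have "det (rho j n) = 0"
    by (rule det_zero_if_commutator_smult[OF A X dim_pos weight AX])
  then obtain v where v: "v \<in> carrier_vec d" "v \<noteq> 0\<^sub>v d" "rho j n *\<^sub>v v = 0\<^sub>v d"
    using det_0_iff_vec_prod_zero[OF X] by blast
  show ?thesis
  proof (rule zero_if_invariant_kernel[OF X _ mat_kernelI[OF X v(1,3)] v(2)])
    fix i m w assume im: "i \<le> k" "m \<le> N" and w: "w \<in> mat_kernel (rho j n)"
    show "rho i m *\<^sub>v w \<in> mat_kernel (rho j n)"
    proof (cases "i + m = 0")
      case True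
      then show ?thesis
        using mat_kernel_invariant_if_commutator_smult[OF A X AX w] by simp
    next
      case False
      then show ?thesis
        using mat_kernel_invariant_if_commute[OF rho_carrier[OF im] X commute[OF im] w] by simp
    qed
  qed
qed

lemma vanish_if_weight_zero:
  assumes "p \<noteq> 0" and jn: "j \<le> k" "n \<le> N" "0 < j + n"
    and commute: "\<And>i m. i \<le> k \<Longrightarrow> m \<le> N \<Longrightarrow> 0 < i + m \<Longrightarrow> rho i m * rho j n = rho j n * rho i m"
    and weight: "gcoef p 0 0 j n = 0"
  shows "rho j n = 0\<^sub>m d d"
proof -
  have X: "rho j n \<in> carrier_mat d d"
    using rho_carrier jn by auto
  have "rho 0 0 * rho j n - rho j n * rho 0 0 = 0\<^sub>m d d"
    using bracket[of 0 0 j n] jn weight X by simp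
  then have "rho 0 0 * rho j n = rho j n * rho 0 0"
    using minus_mat_eq_zero_iff rho_carrier X by (meson le0 mult_carrier_mat)
  then obtain \<mu> where X_scalar: "rho j n = \<mu> \<cdot>\<^sub>m 1\<^sub>m d"
    using scalar_if_commuting[OF X] commute by (metis add_gr_0 bot_nat_0.not_eq_extremum)
  have j_eq: "of_nat j = p * of_nat n"
    using weight unfolding gcoef_def by (simp add: algebra_simps)
  have "n \<noteq> 0"
  proof
    assume "n = 0"
    with j_eq \<open>0 < j + n\<close> show False by simp
  qed
  have "j \<noteq> 0"
  proof
    assume "j = 0"
    with j_eq \<open>p \<noteq> 0\<close> \<open>n \<noteq> 0\<close> show False by simp
  qed
  have "gcoef p j 0 0 n = - of_nat (j * (n + 2))"
    unfolding gcoef_def using j_eq by (simp add: algebra_simps)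
  moreover have "(of_nat (j * (n + 2)) :: complex) \<noteq> 0"
    using \<open>j \<noteq> 0\<close> by (simp only: of_nat_eq_0_iff) simp
  ultimately have g: "gcoef p j 0 0 n \<noteq> 0"
    by (metis neg_equal_0_iff_equal)
  have "rho j 0 * rho 0 n - rho 0 n * rho j 0 = gcoef p j 0 0 n \<cdot>\<^sub>m rho j n"
    using bracket[of j 0 0 n] jn by simp
  then have "gcoef p j 0 0 n * mat_trace (rho j n) = 0"
    using mat_trace_commutator[of "rho j 0" d "rho 0 n"] rho_carrier jn X
    by (simp add: mat_trace_smult)
  then have "\<mu> * of_nat d = 0"
    using g X_scalar mat_trace_smult[of "1\<^sub>m d" d \<mu>] by (simp add: mat_trace_one)
  then show ?thesis
    using X_scalar dim_pos by simp
qed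

lemma positive_degree_vanish:
  assumes "p \<noteq> 0"
  shows "j \<le> k \<Longrightarrow> n \<le> N \<Longrightarrow> 0 < j + n \<Longrightarrow> rho j n = 0\<^sub>m d d"
proof (induction "k + N - (j + n)" arbitrary: j n rule: less_induct)
  case less
  have "rho i m = 0\<^sub>m d d" if "i \<le> k" "m \<le> N" "j + n < i + m" for i m
  proof (rule less.hyps)
    show "k + N - (i + m) < k + N - (j + n)"
      using that by arith
  qed (use that in auto)
  then have "rho i m * rho j n = rho j n * rho i m" if "i \<le> k" "m \<le> N" "0 < i + m" for i m
    using commute_if_higher_vanish less.prems that by blast
  then show ?case
    using vanish_if_weight_nonzero vanish_if_weight_zero \<open>p \<noteq> 0\<close> less.prems by blast
qed

lemma dim_eq_one:
  assumes "p \<noteq> 0"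
  shows "d = 1"
proof (rule dim_one_if_scalar)
  fix i m assume im: "i \<le> k" "m \<le> N"
  show "\<exists>c. rho i m = c \<cdot>\<^sub>m 1\<^sub>m d"
  proof (cases "i + m = 0")
    case True
    have A: "rho 0 0 \<in> carrier_mat d d"
      using rho_carrier by simp
    have "rho i' m' * rho 0 0 = rho 0 0 * rho i' m'" if "i' \<le> k" "m' \<le> N" for i' m'
      using positive_degree_vanish[OF assms that] left_mult_zero_mat[OF A] right_mult_zero_mat[OF A]
      by (cases "i' + m' = 0") auto
    then show ?thesis
      using True scalar_if_commuting rho_carrier by simp
  next
    case False
    then have "rho i m = 0 \<cdot>\<^sub>m 1\<^sub>m d"
      using positive_degree_vanish[OF assms im] by auto
    then show ?thesis ..
  qed
qed

end

theorem lemma3p3: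
  fixes p :: complex and k N d :: nat and rho :: "nat \<Rightarrow> nat \<Rightarrow> complex mat"
  assumes "p \<noteq> 0"
    and "is_GkN_rep p k N d rho"
    and "GkN_nontrivial k N d rho"
    and "GkN_irreducible k N d rho"
  shows "d = 1"
proof -
  interpret GkN_irrep p k N d rho
    using assms(2,4) by unfold_locales (auto simp: is_GkN_rep_def)
  show ?thesis
    using dim_eq_one[OF assms(1)] .
qed

end
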